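(* Fix $\delta>0$, $\epsilon>0$, and an integer $L\geq 2$. A learner strategy $\phi\in\Phi_N$ is $(\epsilon,\delta,L)$-secure if and only if it is $(\epsilon,\delta,L)$-private.
   Context: Setting: a learner wants to determine a true value $v^*\in[0,1)$. At step $k$ she submits a query $q_k\in[0,1)$ and receives the response $r_k=\mathbb{I}(v^*\geq q_k)$. A learner strategy $\phi$ of length $N$ uses a random seed $Y$, uniform on $\{1,2,\dots,\mathcal{Y}\}$, and consists of query functions $q_1=\phi_1(Y)$ and $q_k=\phi_k(r_1,\dots,r_{k-1},Y)$ for $k=2,\dots,N$, together with an estimation function $\hat{x}=\phi^E(r_1,\dots,r_N,Y)$. $\Phi_N$ denotes the set of all learner strategies of length $N$. An adversary observes the queries (but not the responses) and knows the strategy $\phi$, including the distribution of $Y$. For $x\in[0,1)$, $\mathcal{Q}(x)$ is the set of query sequences $\overline{q}\in[0,1)^N$ that occur with positive probability (over $Y$) when $v^*=x$, and $\mathcal{Q}=\bigcup_{x\in[0,1)}\mathcal{Q}(x)$. The adversary's information set is $\mathcal{I}(\overline{q})=\{x\in[0,1):\overline{q}\in\mathcal{Q}(x)\}$. A collection of $L$ closed intervals $[a_1,b_1],\dots,[a_L,b_L]$ with $b_j-a_j\leq\delta$ for all $j$ and whose union contains a set $\mathcal{E}\subset\mathbb{R}$ is a $(\delta,L)$ cover of $\mathcal{E}$; $\mathcal{E}$ is $(\delta,L)$-coverable if such a cover exists, and the $\delta$-cover number is $C_\delta(\mathcal{E})=\min\{L\in\mathbb{N}:\mathcal{E}\text{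 is }(\delta,L)\text{-coverable}\}$. $\phi$ is $(\epsilon,\delta,L)$-private if (1) accuracy: $\mathbb{P}(|\hat{x}(x,Y)-x|\leq\epsilon/2)=1$ for all $x\in[0,1)$, where $\hat{x}(x,Y)$ is the learner's estimate when $v^*=x$; and (2) privacy: $C_\delta(\mathcal{I}(\overline{q}))\geq L$ for every $x\in[0,1)$ and every $\overline{q}\in\mathcal{Q}(x)$. An adversary estimator $\hat{x}^a$ is a random variable whose value is determined by the observed query sequence $\overline{q}$ together with an independent randomization. It is $(\delta,L)$-correct with respect to $\overline{q}\in\mathcal{Q}$ if $\mathbb{P}(|\hat{x}^a(\overline{q})-x|\leq\delta/2)>1/L$ for all $x\in\mathcal{I}(\overline{q})$ (probability over the estimator's randomization). $\phi$ is $(\epsilon,\delta,L)$-secure if it satisfies the same accuracy constraint (1) and, for every $\overline{q}\in\mathcal{Q}$, there is no adversary estimator that is $(\delta,L)$-correct with respect to $\overline{q}$; i.e., for every $\overline{q}\in\mathcal{Q}$ and every adversary estimator there exists $x\in\mathcal{I}(\overline{q})$ with $\mathbb{P}(|\hat{x}^a(\overline{q})-x|\leq\delta/2)\leq 1/L$. *)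

theory Defs
  imports "HOL-Probability.Probability"
begin

text \<open>The seed Y is uniform on {1..nseeds}.
  The k-th query is  qry [r_1,...,r_(k-1)] Y  (the number of responses given so far
  determines k), and the estimate is  est [r_1,...,r_N] Y.\<close>

record strategy =
  nseeds :: nat
  qry :: "bool list \<Rightarrow> nat \<Rightarrow> real"
  est :: "bool list \<Rightarrow> nat \<Rightarrow> real"

definition seeds :: "strategy \<Rightarrow> nat set" where
  "seeds \<phi> = {1..nseeds \<phi>}"

definition Phi :: "nat \<Rightarrow> strategy set" where
  "Phi N = {\<phi>. nseeds \<phi> \<ge> 1 \<and>
     (\<forall>rs y. length rs < N \<longrightarrow> y \<in> seeds \<phi> \<longrightarrow> qry \<phi> rs y \<in> {0..<1})}"

fun responses :: "strategy \<Rightarrow> real \<Rightarrow> nat \<Rightarrow> nat \<Rightarrow> bool list" where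
  "responses \<phi> x y 0 = []"
| "responses \<phi> x y (Suc k) =
     (let rs = responses \<phi> x y k in rs @ [x \<ge> qry \<phi> rs y])"

definition query_seq :: "strategy \<Rightarrow> nat \<Rightarrow> real \<Rightarrow> nat \<Rightarrow> real list" where
  "query_seq \<phi> N x y = map (\<lambda>k. qry \<phi> (responses \<phi> x y k) y) [0..<N]"

definition estimate :: "strategy \<Rightarrow> nat \<Rightarrow> real \<Rightarrow> nat \<Rightarrow> real" where
  "estimate \<phi> N x y = est \<phi> (responses \<phi> x y N) y"

text \<open>Q(x): query sequences occurring with positive probability (uniform seed).\<close>
definition Qx :: "strategy \<Rightarrow> nat \<Rightarrow> real \<Rightarrow> real list set" where
  "Qx \<phi> N x = {qs. \<exists>y \<in> seeds \<phi>. query_seq \<phi> N x y = qs}"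

definition Qall :: "strategy \<Rightarrow> nat \<Rightarrow> real list set" where
  "Qall \<phi> N = (\<Union>x \<in> {0..<1}. Qx \<phi> N x)"

definition info_set :: "strategy \<Rightarrow> nat \<Rightarrow> real list \<Rightarrow> real set" where
  "info_set \<phi> N qs = {x \<in> {0..<1}. qs \<in> Qx \<phi> N x}"

definition coverable :: "real \<Rightarrow> nat \<Rightarrow> real set \<Rightarrow> bool" where
  "coverable \<delta> L E \<longleftrightarrow> (\<exists>a b :: nat \<Rightarrow> real.
     (\<forall>j < L. b j - a j \<le> \<delta>) \<and> E \<subseteq> (\<Union>j < L. {a j..b j}))"

definition cover_number :: "real \<Rightarrow> real set \<Rightarrow> nat" where
  "cover_number \<delta> E = (LEAST L. coverable \<delta> L E)"

definition accurate :: "real \<Rightarrow> nat \<Rightarrow> strategy \<Rightarrow> bool" where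
  "accurate \<epsilon> N \<phi> \<longleftrightarrow>
     (\<forall>x \<in> {0..<1}. \<forall>y \<in> seeds \<phi>. \<bar>estimate \<phi> N x y - x\<bar> \<le> \<epsilon> / 2)"

definition learner_private :: "real \<Rightarrow> real \<Rightarrow> nat \<Rightarrow> nat \<Rightarrow> strategy \<Rightarrow> bool" where
  "learner_private \<epsilon> \<delta> L N \<phi> \<longleftrightarrow> accurate \<epsilon> N \<phi> \<and>
     (\<forall>x \<in> {0..<1}. \<forall>qs \<in> Qx \<phi> N x. cover_number \<delta> (info_set \<phi> N qs) \<ge> L)"

text \<open>An adversary estimator for a fixed observed query sequence is a real-valued
  random variable; it is represented by its distribution, an arbitrary Borel
  probability measure M on the reals.\<close>
definition adversary_correct :: "real \<Rightarrow> nat \<Rightarrow> real set \<Rightarrow> real measure \<Rightarrow> bool" where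
  "adversary_correct \<delta> L I M \<longleftrightarrow>
     (\<forall>x \<in> I. measure M {x - \<delta>/2 .. x + \<delta>/2} > 1 / real L)"

definition learner_secure :: "real \<Rightarrow> real \<Rightarrow> nat \<Rightarrow> nat \<Rightarrow> strategy \<Rightarrow> bool" where
  "learner_secure \<epsilon> \<delta> L N \<phi> \<longleftrightarrow> accurate \<epsilon> N \<phi> \<and>
     (\<forall>qs \<in> Qall \<phi> N. \<forall>M :: real measure.
        prob_space M \<longrightarrow> sets M = sets borel \<longrightarrow>
        \<not> adversary_correct \<delta> L (info_set \<phi> N qs) M)"

end

theory Submission
  imports Defs
begin

text \<open>For an information set \<open>I\<close> (a nonempty subset of [0,1)) both notions say that \<open>I\<close>
  cannot be covered by fewer than \<open>L\<close> intervals of length at most \<open>\<delta>\<close>.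
  If \<open>m < L\<close> such intervals cover \<open>I\<close>, the adversary who guesses the midpoint of a
  uniformly random one of them lands within \<open>\<delta>/2\<close> of every \<open>x \<in> I\<close> with probability
  at least \<open>1/m > 1/L\<close>.  Conversely, if \<open>I\<close> needs at least \<open>L\<close> intervals, a greedy
  sweep from the left yields \<open>L\<close> points of \<open>I\<close> with gaps larger than \<open>\<delta>\<close>; their
  windows of radius \<open>\<delta>/2\<close> are disjoint, so no probability distribution puts mass
  above \<open>1/L\<close> on each of them.\<close>

lemma coverable_Suc:
  assumes "coverable \<delta> n (E - {a..a + \<delta>})"
  shows "coverable \<delta> (Suc n) E"
proof -
  obtain lo hi :: "nat \<Rightarrow> real"
    where len: "\<forall>j<n. hi j - lo j \<le> \<delta>" and cov: "E - {a..a + \<delta>} \<subseteq> (\<Union>j<n. {lo j..hi j})"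
    using assms unfolding coverable_def by blast
  let ?lo = "lo(n := a)" and ?hi = "hi(n := a + \<delta>)"
  have "\<forall>j<Suc n. ?hi j - ?lo j \<le> \<delta>"
    using len by (simp add: less_Suc_eq)
  moreover have "E \<subseteq> (\<Union>j<Suc n. {?lo j..?hi j})"
  proof
    fix z assume "z \<in> E"
    then consider "z \<in> {a..a + \<delta>}" | j where "j < n" "z \<in> {lo j..hi j}"
      using cov by blast
    then show "z \<in> (\<Union>j<Suc n. {?lo j..?hi j})"
      by cases (force intro: UN_I[of n], force intro: UN_I)
  qed
  ultimately show ?thesis
    unfolding coverable_def by blast
qed

lemma coverable_if_subset_atLeastAtMost:
  fixes E :: "real set"
  assumes "E \<subseteq> {a..b}" "b - a < real n * \<delta>"
  shows "coverable \<delta> n E"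
  using assms
proof (induction n arbitrary: a E)
  case 0
  then have "E = {}" by auto
  then show ?case unfolding coverable_def by simp
next
  case (Suc n)
  have "E - {a..a + \<delta>} \<subseteq> {a + \<delta>..b}" "b - (a + \<delta>) < real n * \<delta>"
    using Suc.prems by (auto simp: algebra_simps)
  then show ?case
    using Suc.IH coverable_Suc by blast
qed

lemma coverable_cover_number:
  assumes "coverable \<delta> L E"
  shows "coverable \<delta> (cover_number \<delta> E) E"
  unfolding cover_number_def using assms by (rule LeastI)

lemma cover_number_le:
  assumes "coverable \<delta> L E"
  shows "cover_number \<delta> E \<le> L"
  unfolding cover_number_def using assms by (rule Least_le)

definition separated :: "real \<Rightarrow> nat \<Rightarrow> (nat \<Rightarrow> real) \<Rightarrow> bool" where
  "separated \<delta> n x \<longleftrightarrow> (\<forall>i\<le>n. \<forall>j\<le>n. i < j \<longrightarrow> x i + \<delta> < x j)"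

lemma separated_case_nat:
  assumes "separated \<delta> n x" "0 \<le> \<delta>" "y + \<delta> < x 0"
  shows "separated \<delta> (Suc n) (case_nat y x)"
  unfolding separated_def
proof (intro allI impI)
  fix i j assume "i \<le> Suc n" "j \<le> Suc n" "i < j"
  then obtain j' where j': "j = Suc j'" "j' \<le> n"
    by (cases j) auto
  show "case_nat y x i + \<delta> < case_nat y x j"
  proof (cases i)
    case 0
    have "x 0 \<le> x j'"
      using assms(1,2) j'(2) unfolding separated_def by (cases j') force+
    then show ?thesis
      using 0 j'(1) assms(3) by simp
  next
    case (Suc i')
    then show ?thesis
      using assms(1) \<open>i < j\<close> j' unfolding separated_def by simp
  qed
qed

lemma separated_points_if_not_coverable:
  fixes E :: "real set"
  assumes "bdd_below E" "0 \<le> \<delta>" "\<not> coverable \<delta> n E"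
  shows "\<exists>x. (\<forall>i\<le>n. x i \<in> E) \<and> separated \<delta> n x"
  using assms
proof (induction n arbitrary: E)
  case 0
  then obtain y where "y \<in> E"
    unfolding coverable_def by auto
  then show ?case
    by (auto simp: separated_def)
next
  case (Suc n)
  have "E \<noteq> {}"
  proof
    assume "E = {}"
    then have "coverable \<delta> (Suc n) E"
      unfolding coverable_def using Suc.prems(2) by (intro exI[of _ "\<lambda>_. 0"]) auto
    then show False
      using Suc.prems(3) by blast
  qed
  define a where "a = Inf E"
  have "\<not> coverable \<delta> n (E - {a..a + \<delta>})"
    using Suc.prems(3) coverable_Suc by blast
  moreover have "bdd_below (E - {a..a + \<delta>})"
    using Suc.prems(1) by (rule bdd_below_mono) blast
  ultimately obtain x where in_E: "\<forall>i\<le>n. x i \<in> E - {a..a + \<delta>}" and "separated \<delta> n x"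
    using Suc.IH Suc.prems(2) by blast
  have "a \<le> x 0"
    unfolding a_def using in_E Suc.prems(1) by (simp add: cInf_lower)
  then have "Inf E < x 0 - \<delta>"
    using in_E unfolding a_def by force
  then obtain y where "y \<in> E" "y + \<delta> < x 0"
    using cInf_less_iff[OF \<open>E \<noteq> {}\<close> Suc.prems(1)] by force
  have "\<forall>i\<le>Suc n. case_nat y x i \<in> E"
    using in_E \<open>y \<in> E\<close> by (auto split: nat.split)
  moreover have "separated \<delta> (Suc n) (case_nat y x)"
    using \<open>separated \<delta> n x\<close> Suc.prems(2) \<open>y + \<delta> < x 0\<close> by (rule separated_case_nat)
  ultimately show ?case
    by blast
qed

lemma disjoint_family_on_windows_if_separated:
  assumes "separated \<delta> n x"
  shows "disjoint_family_on (\<lambda>i. {x i - \<delta>/2..x i + \<delta>/2}) {..n}"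
proof -
  have "{x i - \<delta>/2..x i + \<delta>/2} \<inter> {x j - \<delta>/2..x j + \<delta>/2} = {}"
    if "i \<le> n" "j \<le> n" "i < j" for i j
  proof -
    have "x i + \<delta> < x j"
      using assms that unfolding separated_def by blast
    then show ?thesis
      by auto
  qed
  then show ?thesis
    unfolding disjoint_family_on_def by (metis atMost_iff Int_commute linorder_neqE_nat)
qed

lemma (in prob_space) disjoint_family_ex_prob_le:
  assumes "finite I" "I \<noteq> {}" "disjoint_family_on A I" "A ` I \<subseteq> events"
  shows "\<exists>i\<in>I. prob (A i) \<le> 1 / card I"
proof (rule ccontr)
  assume "\<not> ?thesis"
  then have "(\<Sum>i\<in>I. 1 / card I) < (\<Sum>i\<in>I. prob (A i))"
    using assms(1,2) by (intro sum_strict_mono) auto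
  also have "\<dots> = prob (\<Union>i\<in>I. A i)"
    using assms by (intro finite_measure_finite_Union[symmetric])
  also have "\<dots> \<le> 1"
    by (rule prob_le_1)
  finally show False
    using assms(1,2) by simp
qed

lemma ex_adversary_correct_if_coverable:
  assumes "coverable \<delta> m E" "E \<noteq> {}" "m < L"
  shows "\<exists>M. prob_space M \<and> sets M = sets borel \<and> adversary_correct \<delta> L E M"
proof -
  obtain lo hi :: "nat \<Rightarrow> real"
    where len: "\<forall>j<m. hi j - lo j \<le> \<delta>" and cov: "E \<subseteq> (\<Union>j<m. {lo j..hi j})"
    using assms(1) unfolding coverable_def by blast
  have "m \<noteq> 0"
    using cov assms(2) by auto
  define mid where "mid j = (lo j + hi j) / 2" for j
  define M where "M = distr (measure_pmf (pmf_of_set {..<m})) borel mid"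
  have mid_meas: "mid \<in> measurable (measure_pmf (pmf_of_set {..<m})) borel"
    by simp
  have "measure M {x - \<delta>/2..x + \<delta>/2} > 1 / real L" if "x \<in> E" for x
  proof -
    let ?hits = "{..<m} \<inter> mid -` {x - \<delta>/2..x + \<delta>/2}"
    obtain j where "j < m" "x \<in> {lo j..hi j}"
      using cov \<open>x \<in> E\<close> by blast
    then have "j \<in> ?hits"
      using len unfolding mid_def by auto
    then have "1 \<le> card ?hits"
      by (metis One_nat_def Suc_leI card_gt_0_iff empty_iff finite_Int finite_lessThan)
    have "1 / real L < 1 / real m"
      using assms(3) \<open>m \<noteq> 0\<close> by (simp add: frac_less2)
    also have "\<dots> \<le> card ?hits / real m"
      using \<open>1 \<le> card ?hits\<close> by (simp add: divide_right_mono)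
    also have "\<dots> = measure M {x - \<delta>/2..x + \<delta>/2}"
      unfolding M_def using \<open>m \<noteq> 0\<close>
      by (simp add: measure_distr[OF mid_meas] measure_pmf_of_set[of "{..<m}"] lessThan_empty_iff)
    finally show ?thesis .
  qed
  moreover have "prob_space M"
    unfolding M_def by (rule prob_space.prob_space_distr[OF measure_pmf.prob_space_axioms mid_meas])
  ultimately show ?thesis
    unfolding adversary_correct_def by (intro exI[of _ M]) (simp add: M_def)
qed

lemma not_adversary_correct_if_not_coverable:
  fixes E :: "real set"
  assumes "bdd_below E" "0 \<le> \<delta>" "\<not> coverable \<delta> n E"
    and "prob_space M" "sets M = sets borel"
  shows "\<not> adversary_correct \<delta> (Suc n) E M"
proof
  assume correct: "adversary_correct \<delta> (Suc n) E M"
  obtain x where in_E: "\<forall>i\<le>n. x i \<in> E" and sep: "separated \<delta> n x"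
    using separated_points_if_not_coverable[OF assms(1-3)] by blast
  define W where "W i = {x i - \<delta>/2..x i + \<delta>/2}" for i
  have "disjoint_family_on W {..n}"
    unfolding W_def using sep by (rule disjoint_family_on_windows_if_separated)
  moreover have "W ` {..n} \<subseteq> sets M"
    by (rule image_subsetI) (simp add: assms(5) W_def)
  ultimately obtain i where "i \<le> n" "measure M (W i) \<le> 1 / real (Suc n)"
    using prob_space.disjoint_family_ex_prob_le[OF assms(4), of "{..n}" W] by auto
  then show False
    using correct in_E unfolding adversary_correct_def W_def by fastforce
qed

lemma ex_adversary_correct_iff_cover_number_less:
  fixes E :: "real set"
  assumes "0 < \<delta>" "E \<noteq> {}" "E \<subseteq> {a..b}" "1 \<le> L"
  shows "(\<exists>M. prob_space M \<and> sets M = sets borel \<and> adversary_correct \<delta> L E M)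
    \<longleftrightarrow> cover_number \<delta> E < L"
proof
  obtain n where "b - a < real n * \<delta>"
    using reals_Archimedean3[OF assms(1)] by blast
  then have "coverable \<delta> n E"
    by (rule coverable_if_subset_atLeastAtMost[OF assms(3)])
  then show "cover_number \<delta> E < L \<Longrightarrow> \<exists>M. prob_space M \<and> sets M = sets borel \<and> adversary_correct \<delta> L E M"
    using coverable_cover_number ex_adversary_correct_if_coverable assms(2) by blast
next
  assume "\<exists>M. prob_space M \<and> sets M = sets borel \<and> adversary_correct \<delta> L E M"
  then obtain M where M: "prob_space M" "sets M = sets borel" and correct: "adversary_correct \<delta> L E M"
    by blast
  have "bdd_below E"
    using assms(3) by (meson bdd_below_Icc bdd_below_mono)
  have "coverable \<delta> (L - 1) E"
  proof (rule ccontr)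
    assume "\<not> coverable \<delta> (L - 1) E"
    with \<open>bdd_below E\<close> assms(1) M have "\<not> adversary_correct \<delta> (Suc (L - 1)) E M"
      by (intro not_adversary_correct_if_not_coverable) auto
    with correct assms(4) show False
      by simp
  qed
  then show "cover_number \<delta> E < L"
    using cover_number_le[of \<delta> "L - 1" E] assms(4) by linarith
qed

theorem proposition2:
  fixes \<delta> \<epsilon> :: real and L N :: nat and \<phi> :: strategy
  assumes "\<delta> > 0" and "\<epsilon> > 0" and "L \<ge> 2" and "\<phi> \<in> Phi N"
  shows "learner_secure \<epsilon> \<delta> L N \<phi> \<longleftrightarrow> learner_private \<epsilon> \<delta> L N \<phi>"
proof -
  have secure_iff: "(\<forall>M. prob_space M \<longrightarrow> sets M = sets borel \<longrightarrow>
      \<not> adversary_correct \<delta> L (info_set \<phi> N qs) M) \<longleftrightarrow> L \<le> cover_number \<delta> (info_set \<phi> N qs)"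
    if "qs \<in> Qall \<phi> N" for qs
  proof -
    have "info_set \<phi> N qs \<noteq> {}" "info_set \<phi> N qs \<subseteq> {0..1}"
      using that unfolding Qall_def info_set_def by auto
    with assms(1,3) have "(\<exists>M. prob_space M \<and> sets M = sets borel \<and>
        adversary_correct \<delta> L (info_set \<phi> N qs) M) \<longleftrightarrow> cover_number \<delta> (info_set \<phi> N qs) < L"
      by (intro ex_adversary_correct_iff_cover_number_less) auto
    then show ?thesis
      by auto
  qed
  have "learner_secure \<epsilon> \<delta> L N \<phi> \<longleftrightarrow>
      accurate \<epsilon> N \<phi> \<and> (\<forall>qs\<in>Qall \<phi> N. L \<le> cover_number \<delta> (info_set \<phi> N qs))"
    unfolding learner_secure_def using secure_iff by simp
  also have "\<dots> \<longleftrightarrow> learner_private \<epsilon> \<delta> L N \<phi>"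
    unfolding learner_private_def Qall_def by blast
  finally show ?thesis .
qed

end
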